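(* Let $G$ be a trigraph containing a fence gadget $F$ (with sides $A$, $B$) attached to a set $S$. In any partial contraction sequence from $G$, if the first contraction that involves two vertices of $V(F)$ involves a pair $(a_i,b_j)$ with $a_i\in A$, $b_j\in B$, then the vertex created by it has at least $3$ red neighbours whose parts intersect $V(F)$.
   Context: A trigraph $G$ consists of a vertex set $V(G)$ and two disjoint sets of unordered pairs of distinct vertices: black edges and red edges. Contracting two distinct vertices $u,v$ replaces them by a new vertex $w$ such that, for every other vertex $z$, $wz$ is black if $uz,vz$ are both black, a non-edge if both are non-edges, and red otherwise. In a partial contraction sequence from $G$, each vertex $u$ of a later trigraph corresponds to the set $u(G)$ (its part) of vertices of $G$ merged into it; a contraction of $u,u'$ involves a vertex $v$ of $G$ if $v\in u(G)\cup u'(G)$, and involves a pair $v,v'$ if $v\in u(G),v'\in u'(G)$ or vice versa. A fence gadget is a trigraph $F$ on $A\cup B$, $A=\{a_1,\dots,a_6\}$, $B=\{b_1,\dots,b_6\}$, whose black edges are those of the cycles $a_1a_2a_3a_4a_5a_6a_1$ and $b_1b_2b_3b_4b_5b_6b_1$ together with $b_1a_6$, and whose red edges are $a_ib_i$ for $i\in[6]$ and $a_ib_{i+1}$ for $i\in[5]$. Inside a trigraph $G$, a fence gadget $F$ is attached to a nonempty set $S\subseteq V(G)\setminus V(F)$ if every vertex of $A$ is joined by a black edge to every vertex of $S$ and no vertex of $B$ is adjacent to a vertex of $S$. *)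

theory Defs
  imports Main
begin

text \<open>A trigraph over vertex type 'v: (vertex set, black edges, red edges);
edges are unordered pairs represented as two-element sets.\<close>
type_synonym 'v trigraph = "'v set \<times> 'v set set \<times> 'v set set"

definition tverts :: "'v trigraph \<Rightarrow> 'v set" where "tverts T = fst T"
definition tblack :: "'v trigraph \<Rightarrow> 'v set set" where "tblack T = fst (snd T)"
definition tred :: "'v trigraph \<Rightarrow> 'v set set" where "tred T = snd (snd T)"

definition is_trigraph :: "'v trigraph \<Rightarrow> bool" where
  "is_trigraph T \<longleftrightarrow> finite (tverts T) \<and> tblack T \<inter> tred T = {} \<and>
     (\<forall>e \<in> tblack T \<union> tred T. \<exists>x y. x \<noteq> y \<and> x \<in> tverts T \<and> y \<in> tverts T \<and> e = {x, y})"

text \<open>In a partial contraction sequence, every vertex is named by its part,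
i.e. the set of vertices of the original trigraph merged into it.\<close>
definition lift :: "'v trigraph \<Rightarrow> 'v set trigraph" where
  "lift T = ((\<lambda>x. {x}) ` tverts T, (\<lambda>e. (\<lambda>x. {x}) ` e) ` tblack T,
             (\<lambda>e. (\<lambda>x. {x}) ` e) ` tred T)"

definition contract :: "'v set trigraph \<Rightarrow> 'v set \<Rightarrow> 'v set \<Rightarrow> 'v set trigraph" where
  "contract T u v =
    (let w = u \<union> v; Z = tverts T - {u, v} in
     (insert w Z,
      {e \<in> tblack T. u \<notin> e \<and> v \<notin> e} \<union>
        {{w, z} | z. z \<in> Z \<and> {u, z} \<in> tblack T \<and> {v, z} \<in> tblack T},
      {e \<in> tred T. u \<notin> e \<and> v \<notin> e} \<union>
        {{w, z} | z. z \<in> Z \<and> ({u, z} \<in> tblack T \<union> tred T \<or> {v, z} \<in> tblack T \<union> tred T)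
                  \<and> \<not> ({u, z} \<in> tblack T \<and> {v, z} \<in> tblack T)}))"

definition apply_seq :: "'v set trigraph \<Rightarrow> ('v set \<times> 'v set) list \<Rightarrow> 'v set trigraph" where
  "apply_seq T ps = foldl (\<lambda>T' p. contract T' (fst p) (snd p)) T ps"

definition partial_contraction_seq :: "'v trigraph \<Rightarrow> ('v set \<times> 'v set) list \<Rightarrow> bool" where
  "partial_contraction_seq G ps \<longleftrightarrow>
     (\<forall>k < length ps. let T = apply_seq (lift G) (take k ps) in
        fst (ps ! k) \<in> tverts T \<and> snd (ps ! k) \<in> tverts T \<and> fst (ps ! k) \<noteq> snd (ps ! k))"

text \<open>Fence gadget with A = a ` {1..6}, B = b ` {1..6}.\<close>
definition fence_black :: "(nat \<Rightarrow> 'v) \<Rightarrow> (nat \<Rightarrow> 'v) \<Rightarrow> 'v set set" where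
  "fence_black a b =
     {{a i, a (i mod 6 + 1)} | i. i \<in> {1..6}} \<union> {{b i, b (i mod 6 + 1)} | i. i \<in> {1..6}}
     \<union> {{b 1, a 6}}"

definition fence_red :: "(nat \<Rightarrow> 'v) \<Rightarrow> (nat \<Rightarrow> 'v) \<Rightarrow> 'v set set" where
  "fence_red a b = {{a i, b i} | i. i \<in> {1..6}} \<union> {{a i, b (i + 1)} | i. i \<in> {1..5}}"

definition fence_verts :: "(nat \<Rightarrow> 'v) \<Rightarrow> (nat \<Rightarrow> 'v) \<Rightarrow> 'v set" where
  "fence_verts a b = a ` {1..6} \<union> b ` {1..6}"

definition contains_fence :: "'v trigraph \<Rightarrow> (nat \<Rightarrow> 'v) \<Rightarrow> (nat \<Rightarrow> 'v) \<Rightarrow> bool" where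
  "contains_fence G a b \<longleftrightarrow>
     inj_on a {1..6} \<and> inj_on b {1..6} \<and> a ` {1..6} \<inter> b ` {1..6} = {} \<and>
     fence_verts a b \<subseteq> tverts G \<and>
     (\<forall>x \<in> fence_verts a b. \<forall>y \<in> fence_verts a b. x \<noteq> y \<longrightarrow>
        ({x, y} \<in> tblack G \<longleftrightarrow> {x, y} \<in> fence_black a b) \<and>
        ({x, y} \<in> tred G \<longleftrightarrow> {x, y} \<in> fence_red a b))"

definition fence_attached :: "'v trigraph \<Rightarrow> (nat \<Rightarrow> 'v) \<Rightarrow> (nat \<Rightarrow> 'v) \<Rightarrow> 'v set \<Rightarrow> bool" where
  "fence_attached G a b S \<longleftrightarrow>
     S \<noteq> {} \<and> S \<subseteq> tverts G - fence_verts a b \<and>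
     (\<forall>i \<in> {1..6}. \<forall>s \<in> S. {a i, s} \<in> tblack G \<and> {b i, s} \<notin> tblack G \<union> tred G)"

definition involves_pair :: "'v set \<Rightarrow> 'v set \<Rightarrow> 'v \<Rightarrow> 'v \<Rightarrow> bool" where
  "involves_pair u u' x y \<longleftrightarrow> (x \<in> u \<and> y \<in> u') \<or> (x \<in> u' \<and> y \<in> u)"

definition involves_two :: "'v set \<Rightarrow> 'v set \<Rightarrow> 'v set \<Rightarrow> bool" where
  "involves_two u u' X \<longleftrightarrow> (\<exists>x \<in> X. \<exists>y \<in> X. x \<noteq> y \<and> x \<in> u \<union> u' \<and> y \<in> u \<union> u')"

end

theory Submission
  imports Defs
begin

(* Up to step k every part of the current trigraph meets the fence in at most one vertex, and
   the current trigraph is a quotient of G: a black edge between parts is black between all their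
   members, and every edge of G between members of distinct parts is an edge between the parts.
   Contracting the parts of a_i and b_j therefore makes the part of a fence vertex c a red neighbour
   of the new vertex whenever c is adjacent to a_i or b_j but not black to both, and distinct such c
   lie in distinct parts. A finite check on the fence gadget yields at least three such c for all
   i, j. *)

lemma tverts_contract: "tverts (contract T u v) = insert (u \<union> v) (tverts T - {u, v})"
  and tblack_contract: "tblack (contract T u v) = {e \<in> tblack T. u \<notin> e \<and> v \<notin> e} \<union>
    {{u \<union> v, z} | z. z \<in> tverts T - {u, v} \<and> {u, z} \<in> tblack T \<and> {v, z} \<in> tblack T}"
  and tred_contract: "tred (contract T u v) = {e \<in> tred T. u \<notin> e \<and> v \<notin> e} \<union>
    {{u \<union> v, z} | z. z \<in> tverts T - {u, v} \<and>
       ({u, z} \<in> tblack T \<union> tred T \<or> {v, z} \<in> tblack T \<union> tred T) \<and>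
       \<not> ({u, z} \<in> tblack T \<and> {v, z} \<in> tblack T)}"
  by (simp_all add: contract_def Let_def tverts_def tblack_def tred_def)

lemma tverts_lift: "tverts (lift G) = (\<lambda>x. {x}) ` tverts G"
  and tblack_lift: "tblack (lift G) = (\<lambda>e. (\<lambda>x. {x}) ` e) ` tblack G"
  and tred_lift: "tred (lift G) = (\<lambda>e. (\<lambda>x. {x}) ` e) ` tred G"
  by (simp_all add: lift_def tverts_def tblack_def tred_def)

lemma apply_seq_take_Suc:
  "m < length ps \<Longrightarrow>
   apply_seq T (take (Suc m) ps) = contract (apply_seq T (take m ps)) (fst (ps ! m)) (snd (ps ! m))"
  by (simp add: apply_seq_def take_Suc_conv_app_nth)

lemma partial_contraction_seq_verts:
  assumes "partial_contraction_seq G ps" "m < length ps"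
  shows "fst (ps ! m) \<in> tverts (apply_seq (lift G) (take m ps))"
    and "snd (ps ! m) \<in> tverts (apply_seq (lift G) (take m ps))"
  using assms unfolding partial_contraction_seq_def Let_def by blast+

lemma edge_contractI:
  assumes "z \<in> tverts T - {u, v}" "{u, z} \<in> tblack T \<union> tred T \<or> {v, z} \<in> tblack T \<union> tred T"
  shows "{u \<union> v, z} \<in> tblack (contract T u v) \<union> tred (contract T u v)"
  using assms unfolding tblack_contract tred_contract by blast

lemma red_contractI:
  assumes "z \<in> tverts T - {u, v}" "{u, z} \<in> tblack T \<union> tred T \<or> {v, z} \<in> tblack T \<union> tred T"
    and "\<not> ({u, z} \<in> tblack T \<and> {v, z} \<in> tblack T)"
  shows "{u \<union> v, z} \<in> tred (contract T u v)"
  using assms unfolding tred_contract by blast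

lemma contract_edge_untouched:
  "{p, q} \<in> tblack T \<union> tred T \<Longrightarrow> u \<notin> {p, q} \<Longrightarrow> v \<notin> {p, q} \<Longrightarrow>
   {p, q} \<in> tblack (contract T u v) \<union> tred (contract T u v)"
  unfolding tblack_contract tred_contract by blast

definition is_quotient :: "'v trigraph \<Rightarrow> 'v set trigraph \<Rightarrow> bool" where
  "is_quotient G T \<longleftrightarrow> finite (tverts T) \<and> (\<forall>x \<in> tverts G. \<exists>p \<in> tverts T. x \<in> p) \<and>
     (\<forall>p q x y. {p, q} \<in> tblack T \<longrightarrow> p \<noteq> q \<longrightarrow> x \<in> p \<longrightarrow> y \<in> q \<longrightarrow> {x, y} \<in> tblack G) \<and>
     (\<forall>p \<in> tverts T. \<forall>q \<in> tverts T. \<forall>x \<in> p. \<forall>y \<in> q. p \<noteq> q \<longrightarrow>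
        {x, y} \<in> tblack G \<union> tred G \<longrightarrow> {p, q} \<in> tblack T \<union> tred T)"

lemma is_quotient_finite: "is_quotient G T \<Longrightarrow> finite (tverts T)"
  by (simp add: is_quotient_def)

lemma is_quotient_cover: "is_quotient G T \<Longrightarrow> x \<in> tverts G \<Longrightarrow> \<exists>p \<in> tverts T. x \<in> p"
  by (simp add: is_quotient_def)

lemma is_quotient_black:
    "is_quotient G T \<Longrightarrow> {p, q} \<in> tblack T \<Longrightarrow> p \<noteq> q \<Longrightarrow> x \<in> p \<Longrightarrow> y \<in> q \<Longrightarrow> {x, y} \<in> tblack G"
  unfolding is_quotient_def by meson

lemma is_quotient_edge:
    "is_quotient G T \<Longrightarrow> p \<in> tverts T \<Longrightarrow> q \<in> tverts T \<Longrightarrow> p \<noteq> q \<Longrightarrow> x \<in> p \<Longrightarrow> y \<in> q \<Longrightarrow>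
     {x, y} \<in> tblack G \<union> tred G \<Longrightarrow> {p, q} \<in> tblack T \<union> tred T"
  unfolding is_quotient_def by meson

lemma singleton_image_eq_doubleton:
  assumes "(\<lambda>x. {x}) ` e = {p, q}" "x \<in> p" "y \<in> q"
  shows "e = {x, y}"
proof -
  have "p \<in> (\<lambda>x. {x}) ` e" "q \<in> (\<lambda>x. {x}) ` e"
    by (simp_all add: assms(1))
  with assms(2,3) have "p = {x}" "q = {y}" "x \<in> e" "y \<in> e"
    by auto
  moreover have "{z} \<in> {p, q}" if "z \<in> e" for z
    using that assms(1) by (metis imageI)
  ultimately show ?thesis by auto
qed

lemma is_quotient_lift:
  assumes "finite (tverts G)"
  shows "is_quotient G (lift G)"
  unfolding is_quotient_def
proof (intro conjI allI impI ballI)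
  show "finite (tverts (lift G))"
    using assms by (simp add: tverts_lift)
next
  fix x assume "x \<in> tverts G"
  then show "\<exists>p \<in> tverts (lift G). x \<in> p"
    by (auto simp: tverts_lift)
next
  fix p q x y
  assume "{p, q} \<in> tblack (lift G)" "x \<in> p" "y \<in> q"
  then obtain e where "e \<in> tblack G" "(\<lambda>x. {x}) ` e = {p, q}"
    unfolding tblack_lift by (metis imageE)
  with \<open>x \<in> p\<close> \<open>y \<in> q\<close> show "{x, y} \<in> tblack G"
    using singleton_image_eq_doubleton by metis
next
  fix p q x y
  assume "p \<in> tverts (lift G)" "q \<in> tverts (lift G)" "x \<in> p" "y \<in> q"
    and "{x, y} \<in> tblack G \<union> tred G"
  then have "p = {x}" "q = {y}"
    by (auto simp: tverts_lift)
  moreover have "(\<lambda>x. {x}) ` {x, y} \<in> (\<lambda>e. (\<lambda>x. {x}) ` e) ` (tblack G \<union> tred G)"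
    using \<open>{x, y} \<in> tblack G \<union> tred G\<close> by (rule imageI)
  ultimately show "{p, q} \<in> tblack (lift G) \<union> tred (lift G)"
    unfolding tblack_lift tred_lift image_Un by simp
qed

lemma is_quotient_edge_merged:
  assumes Q: "is_quotient G T" and "u \<in> tverts T" "v \<in> tverts T" "z \<in> tverts T - {u, v}"
    and "x \<in> u \<union> v" "y \<in> z" "{x, y} \<in> tblack G \<union> tred G"
  shows "{u, z} \<in> tblack T \<union> tred T \<or> {v, z} \<in> tblack T \<union> tred T"
  using assms is_quotient_edge[OF Q] by (metis DiffE UnE insertCI)

lemma is_quotient_black_merged:
  assumes Q: "is_quotient G T" and "z \<in> tverts T - {u, v}"
    and "{u, z} \<in> tblack T" "{v, z} \<in> tblack T" "x \<in> u \<union> v" "y \<in> z"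
  shows "{x, y} \<in> tblack G"
  using assms is_quotient_black[OF Q] by (metis DiffE UnE insertCI)

lemma is_quotient_contract:
  assumes Q: "is_quotient G T" and uv: "u \<in> tverts T" "v \<in> tverts T"
  shows "is_quotient G (contract T u v)"
  unfolding is_quotient_def
proof (intro conjI allI impI ballI)
  show "finite (tverts (contract T u v))"
    using is_quotient_finite[OF Q] by (simp add: tverts_contract)
next
  fix x assume "x \<in> tverts G"
  then obtain p where "p \<in> tverts T" "x \<in> p"
    using is_quotient_cover[OF Q] by blast
  then show "\<exists>p' \<in> tverts (contract T u v). x \<in> p'"
    unfolding tverts_contract by (cases "p \<in> {u, v}") auto
next
  fix p q x y
  assume "{p, q} \<in> tblack (contract T u v)" "p \<noteq> q" "x \<in> p" "y \<in> q"
  from \<open>{p, q} \<in> tblack (contract T u v)\<close> consider "{p, q} \<in> tblack T"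
    | z where "z \<in> tverts T - {u, v}" "{u, z} \<in> tblack T" "{v, z} \<in> tblack T" "{p, q} = {u \<union> v, z}"
    unfolding tblack_contract by blast
  then show "{x, y} \<in> tblack G"
  proof cases
    case 1
    then show ?thesis
      using is_quotient_black[OF Q] \<open>p \<noteq> q\<close> \<open>x \<in> p\<close> \<open>y \<in> q\<close> by meson
  next
    case 2
    then have "p = u \<union> v \<and> q = z \<or> p = z \<and> q = u \<union> v"
      by (simp add: doubleton_eq_iff)
    then show ?thesis
      using is_quotient_black_merged[OF Q 2(1-3)] \<open>x \<in> p\<close> \<open>y \<in> q\<close> by (metis insert_commute)
  qed
next
  fix p q x y
  assume p: "p \<in> tverts (contract T u v)" and q: "q \<in> tverts (contract T u v)"
    and "x \<in> p" "y \<in> q" "p \<noteq> q" and xy: "{x, y} \<in> tblack G \<union> tred G"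
  consider "p = u \<union> v" "q \<in> tverts T - {u, v}" | "q = u \<union> v" "p \<in> tverts T - {u, v}"
    | "p \<in> tverts T - {u, v}" "q \<in> tverts T - {u, v}" "p \<noteq> u \<union> v" "q \<noteq> u \<union> v"
    using p q \<open>p \<noteq> q\<close> unfolding tverts_contract by blast
  then show "{p, q} \<in> tblack (contract T u v) \<union> tred (contract T u v)"
  proof cases
    case 1
    then show ?thesis
      using edge_contractI is_quotient_edge_merged[OF Q uv] \<open>x \<in> p\<close> \<open>y \<in> q\<close> xy by metis
  next
    case 2
    have "{y, x} \<in> tblack G \<union> tred G"
      using xy by (simp add: insert_commute)
    then have "{u \<union> v, p} \<in> tblack (contract T u v) \<union> tred (contract T u v)"
      using 2 edge_contractI is_quotient_edge_merged[OF Q uv] \<open>x \<in> p\<close> \<open>y \<in> q\<close> by metis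
    then show ?thesis
      using 2 by (simp add: insert_commute)
  next
    case 3
    then have "{p, q} \<in> tblack T \<union> tred T"
      using is_quotient_edge[OF Q] \<open>x \<in> p\<close> \<open>y \<in> q\<close> \<open>p \<noteq> q\<close> xy by blast
    then show ?thesis
      using 3 contract_edge_untouched by blast
  qed
qed

lemma is_quotient_apply_seq:
  assumes "finite (tverts G)" "partial_contraction_seq G ps" "m \<le> length ps"
  shows "is_quotient G (apply_seq (lift G) (take m ps))"
  using assms(3)
proof (induction m)
  case 0
  then show ?case
    using is_quotient_lift[OF assms(1)] by (simp add: apply_seq_def)
next
  case (Suc m)
  then have "m < length ps" by simp
  then show ?case
    unfolding apply_seq_take_Suc[OF \<open>m < length ps\<close>]
    using Suc partial_contraction_seq_verts[OF assms(2)] by (simp add: is_quotient_contract)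
qed

definition separates :: "'v set \<Rightarrow> 'v set trigraph \<Rightarrow> bool" where
  "separates F T \<longleftrightarrow> (\<forall>p \<in> tverts T. \<forall>x \<in> F. \<forall>y \<in> F. x \<in> p \<longrightarrow> y \<in> p \<longrightarrow> x = y)"

lemma separatesD:
  "separates F T \<Longrightarrow> p \<in> tverts T \<Longrightarrow> x \<in> F \<Longrightarrow> y \<in> F \<Longrightarrow> x \<in> p \<Longrightarrow> y \<in> p \<Longrightarrow> x = y"
  unfolding separates_def by blast

lemma separates_lift: "separates F (lift G)"
  by (auto simp: separates_def tverts_lift)

lemma separates_contract:
  assumes "separates F T" "\<not> involves_two u v F"
  shows "separates F (contract T u v)"
  using assms unfolding separates_def involves_two_def tverts_contract by blast

lemma separates_apply_seq:
  assumes "\<forall>k < m. \<not> involves_two (fst (ps ! k)) (snd (ps ! k)) F" "m \<le> length ps"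
  shows "separates F (apply_seq (lift G) (take m ps))"
  using assms
proof (induction m)
  case 0
  then show ?case
    by (simp add: apply_seq_def separates_lift)
next
  case (Suc m)
  then show ?case
    by (simp add: apply_seq_take_Suc separates_contract)
qed

text \<open>The vertices that become red neighbours of the new vertex when \<open>x\<close> and \<open>y\<close> are contracted.\<close>
definition mixed_neighbours :: "'a trigraph \<Rightarrow> 'a \<Rightarrow> 'a \<Rightarrow> 'a set" where
  "mixed_neighbours H x y =
     {z \<in> tverts H - {x, y}. ({x, z} \<in> tblack H \<union> tred H \<or> {y, z} \<in> tblack H \<union> tred H)
        \<and> \<not> ({x, z} \<in> tblack H \<and> {y, z} \<in> tblack H)}"

lemma red_edge_contract:
  assumes Q: "is_quotient G T" and uv: "u \<in> tverts T" "v \<in> tverts T" and z: "z \<in> tverts T - {u, v}"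
    and xy: "x \<in> u \<union> v" "y \<in> u \<union> v" and c: "c \<in> z" "c \<in> mixed_neighbours G x y"
  shows "{u \<union> v, z} \<in> tred (contract T u v)"
proof (rule red_contractI[OF z])
  have "{x, c} \<in> tblack G \<union> tred G \<or> {y, c} \<in> tblack G \<union> tred G"
    using c(2) by (simp add: mixed_neighbours_def)
  then show "{u, z} \<in> tblack T \<union> tred T \<or> {v, z} \<in> tblack T \<union> tred T"
    using is_quotient_edge_merged[OF Q uv z] xy c(1) by blast
  have "\<not> ({x, c} \<in> tblack G \<and> {y, c} \<in> tblack G)"
    using c(2) by (simp add: mixed_neighbours_def)
  then show "\<not> ({u, z} \<in> tblack T \<and> {v, z} \<in> tblack T)"
    using is_quotient_black_merged[OF Q z] xy c(1) by blast
qed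

lemma card_mixed_neighbours_le_card_red_parts:
  assumes Q: "is_quotient G T" and sep: "separates F T" and uv: "u \<in> tverts T" "v \<in> tverts T"
    and uv_xy: "involves_pair u v x y" and F: "x \<in> F" "y \<in> F"
  shows "card (mixed_neighbours G x y \<inter> F) \<le>
    card {z \<in> tverts (contract T u v). {u \<union> v, z} \<in> tred (contract T u v) \<and> z \<inter> F \<noteq> {}}"
    (is "card ?M \<le> card ?R")
proof -
  have "\<forall>c \<in> ?M. \<exists>p \<in> tverts T. c \<in> p"
    using is_quotient_cover[OF Q] by (auto simp: mixed_neighbours_def)
  then obtain part where part: "\<And>c. c \<in> ?M \<Longrightarrow> part c \<in> tverts T \<and> c \<in> part c"
    by metis
  have xy: "x \<in> u \<union> v" "y \<in> u \<union> v"
    using uv_xy unfolding involves_pair_def by blast+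
  have part_new: "part c \<in> tverts T - {u, v}" if "c \<in> ?M" for c
  proof -
    have c: "c \<in> F" "c \<noteq> x" "c \<noteq> y"
      using that by (auto simp: mixed_neighbours_def)
    have "part c \<notin> {u, v}"
    proof
      assume "part c \<in> {u, v}"
      then obtain w where "w \<in> {x, y}" "w \<in> part c"
        using uv_xy unfolding involves_pair_def by blast
      moreover have "w \<in> F"
        using \<open>w \<in> {x, y}\<close> F by blast
      ultimately have "w = c"
        using separatesD[OF sep _ _ c(1)] part[OF that] by blast
      then show False
        using c \<open>w \<in> {x, y}\<close> by blast
    qed
    then show ?thesis
      using part[OF that] by blast
  qed
  have "part c \<in> ?R" if "c \<in> ?M" for c
  proof -
    have "{u \<union> v, part c} \<in> tred (contract T u v)"
      using red_edge_contract[OF Q uv part_new[OF that] xy] part that by blast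
    moreover have "part c \<in> tverts (contract T u v)"
      using part_new[OF that] by (simp add: tverts_contract)
    moreover have "c \<in> part c \<inter> F"
      using part that by blast
    ultimately show ?thesis by blast
  qed
  moreover have "inj_on part ?M"
    using separatesD[OF sep] part unfolding inj_on_def by (metis IntD2)
  moreover have "finite ?R"
    using is_quotient_finite[OF is_quotient_contract[OF Q uv]] by simp
  ultimately show ?thesis
    by (meson card_inj_on_le image_subsetI)
qed

lemma fence_verts_image: "fence_verts a b = case_sum a b ` fence_verts Inl Inr"
  by (simp add: fence_verts_def image_Un image_image)

lemma fence_black_image: "fence_black a b = (`) (case_sum a b) ` fence_black Inl Inr"
  by (simp add: fence_black_def setcompr_eq_image image_Un image_image)

lemma fence_red_image: "fence_red a b = (`) (case_sum a b) ` fence_red Inl Inr"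
  by (simp add: fence_red_def setcompr_eq_image image_Un image_image)

lemma fence_edges_subset_Pow:
  "fence_black Inl Inr \<subseteq> Pow (fence_verts Inl Inr)" "fence_red Inl Inr \<subseteq> Pow (fence_verts Inl Inr)"
  by (auto simp: fence_black_def fence_red_def fence_verts_def)

lemma image_doubleton_mem_image_iff:
  assumes "inj_on f A" "E \<subseteq> Pow A" "x \<in> A" "y \<in> A"
  shows "{f x, f y} \<in> (`) f ` E \<longleftrightarrow> {x, y} \<in> E"
  using inj_on_image_mem_iff[OF inj_on_image_Pow[OF assms(1)], of "{x, y}" E] assms(2-4) by simp

definition induced_embedding :: "('a \<Rightarrow> 'b) \<Rightarrow> 'a trigraph \<Rightarrow> 'b trigraph \<Rightarrow> bool" where
  "induced_embedding f H G \<longleftrightarrow> inj_on f (tverts H) \<and> f ` tverts H \<subseteq> tverts G \<and>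
     (\<forall>x \<in> tverts H. \<forall>y \<in> tverts H. x \<noteq> y \<longrightarrow>
        ({f x, f y} \<in> tblack G \<longleftrightarrow> {x, y} \<in> tblack H) \<and> ({f x, f y} \<in> tred G \<longleftrightarrow> {x, y} \<in> tred H))"

lemma image_mixed_neighbours_subset:
  assumes f: "induced_embedding f H G" and x: "x \<in> tverts H" and y: "y \<in> tverts H"
  shows "f ` mixed_neighbours H x y \<subseteq> mixed_neighbours G (f x) (f y)"
proof
  fix w assume "w \<in> f ` mixed_neighbours H x y"
  then obtain z where z: "z \<in> mixed_neighbours H x y" "w = f z"
    by blast
  then have "z \<in> tverts H" "z \<noteq> x" "z \<noteq> y"
    by (auto simp: mixed_neighbours_def)
  with f x y have "f z \<in> tverts G" "f z \<noteq> f x" "f z \<noteq> f y"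
    and "{f x, f z} \<in> tblack G \<longleftrightarrow> {x, z} \<in> tblack H" "{f x, f z} \<in> tred G \<longleftrightarrow> {x, z} \<in> tred H"
    and "{f y, f z} \<in> tblack G \<longleftrightarrow> {y, z} \<in> tblack H" "{f y, f z} \<in> tred G \<longleftrightarrow> {y, z} \<in> tred H"
    unfolding induced_embedding_def inj_on_def by (metis image_subset_iff)+
  with z show "w \<in> mixed_neighbours G (f x) (f y)"
    by (simp add: mixed_neighbours_def)
qed

definition label_fence :: "(nat + nat) trigraph" where
  "label_fence = (fence_verts Inl Inr, fence_black Inl Inr, fence_red Inl Inr)"

lemma tverts_label_fence: "tverts label_fence = fence_verts Inl Inr"
  and tblack_label_fence: "tblack label_fence = fence_black Inl Inr"
  and tred_label_fence: "tred label_fence = fence_red Inl Inr"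
  by (simp_all add: label_fence_def tverts_def tblack_def tred_def)

lemma inj_on_case_sum:
  assumes "inj_on a I" "inj_on b J" "a ` I \<inter> b ` J = {}"
  shows "inj_on (case_sum a b) (Inl ` I \<union> Inr ` J)"
proof -
  have "inj_on (case_sum a b) (Inl ` I)" "inj_on (case_sum a b) (Inr ` J)"
    using assms(1,2) by (simp_all add: inj_on_imageI comp_def)
  moreover have "case_sum a b ` (Inl ` I - Inr ` J) = a ` I" "case_sum a b ` (Inr ` J - Inl ` I) = b ` J"
    by (force simp: image_iff)+
  ultimately show ?thesis
    using assms(3) by (simp add: inj_on_Un)
qed

lemma contains_fence_embedding:
  assumes "contains_fence G a b"
  shows "induced_embedding (case_sum a b) label_fence G"
proof -
  let ?f = "case_sum a b" and ?L = "fence_verts Inl Inr"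
  have inj: "inj_on ?f ?L"
    unfolding fence_verts_def
    by (rule inj_on_case_sum) (use assms in \<open>simp_all add: contains_fence_def\<close>)
  have verts: "?f ` ?L = fence_verts a b"
    by (rule fence_verts_image[symmetric])
  have "({?f x, ?f y} \<in> tblack G \<longleftrightarrow> {x, y} \<in> fence_black Inl Inr) \<and>
        ({?f x, ?f y} \<in> tred G \<longleftrightarrow> {x, y} \<in> fence_red Inl Inr)"
    if "x \<in> ?L" "y \<in> ?L" "x \<noteq> y" for x y
  proof -
    have "?f x \<in> fence_verts a b" "?f y \<in> fence_verts a b" "?f x \<noteq> ?f y"
      using that verts inj_on_eq_iff[OF inj] by blast+
    then have "({?f x, ?f y} \<in> tblack G \<longleftrightarrow> {?f x, ?f y} \<in> fence_black a b) \<and>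
               ({?f x, ?f y} \<in> tred G \<longleftrightarrow> {?f x, ?f y} \<in> fence_red a b)"
      using assms unfolding contains_fence_def by blast
    moreover have "{?f x, ?f y} \<in> fence_black a b \<longleftrightarrow> {x, y} \<in> fence_black Inl Inr"
      using image_doubleton_mem_image_iff[OF inj fence_edges_subset_Pow(1) that(1,2)]
      by (metis fence_black_image)
    moreover have "{?f x, ?f y} \<in> fence_red a b \<longleftrightarrow> {x, y} \<in> fence_red Inl Inr"
      using image_doubleton_mem_image_iff[OF inj fence_edges_subset_Pow(2) that(1,2)]
      by (metis fence_red_image)
    ultimately show ?thesis
      by blast
  qed
  moreover have "fence_verts a b \<subseteq> tverts G"
    using assms unfolding contains_fence_def by blast
  ultimately show ?thesis
    using inj verts
    unfolding induced_embedding_def tverts_label_fence tblack_label_fence tred_label_fence by blast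
qed

lemma mixed_neighbours_list:
  assumes "tverts H = set zs"
  shows "mixed_neighbours H x y = set (filter (\<lambda>z. z \<noteq> x \<and> z \<noteq> y \<and>
     ({x, z} \<in> tblack H \<union> tred H \<or> {y, z} \<in> tblack H \<union> tred H) \<and>
     \<not> ({x, z} \<in> tblack H \<and> {y, z} \<in> tblack H)) zs)"
  using assms by (auto simp: mixed_neighbours_def)

lemma fence_verts_list: "fence_verts a b = set (map a [1..<7] @ map b [1..<7])"
  by (auto simp: fence_verts_def)

lemma fence_black_list: "fence_black a b = set (map (\<lambda>i. {a i, a (i mod 6 + 1)}) [1..<7] @
     map (\<lambda>i. {b i, b (i mod 6 + 1)}) [1..<7] @ [{b 1, a 6}])"
  by (auto simp: fence_black_def)

lemma fence_red_list: "fence_red a b = set (map (\<lambda>i. {a i, b i}) [1..<7] @ map (\<lambda>i. {a i, b (i + 1)}) [1..<6])"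
  by (auto simp: fence_red_def)

lemma card_mixed_neighbours_label_fence:
  assumes "i \<in> {1..6}" "j \<in> {1..6}"
  shows "3 \<le> card (mixed_neighbours label_fence (Inl i) (Inr j))"
proof -
  have "i = 1 \<or> i = 2 \<or> i = 3 \<or> i = 4 \<or> i = 5 \<or> i = 6" "j = 1 \<or> j = 2 \<or> j = 3 \<or> j = 4 \<or> j = 5 \<or> j = 6"
    using assms by auto
  then show ?thesis
    unfolding mixed_neighbours_list[OF tverts_label_fence[unfolded fence_verts_list]] card_set
    by (elim disjE; simp add: tblack_label_fence tred_label_fence fence_black_list fence_red_list
        doubleton_eq_iff upt_rec)
qed

lemma card_fence_mixed_neighbours:
  assumes "contains_fence G a b" "i \<in> {1..6}" "j \<in> {1..6}"
  shows "3 \<le> card (mixed_neighbours G (a i) (b j) \<inter> fence_verts a b)"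
proof -
  let ?f = "case_sum a b" and ?M = "mixed_neighbours label_fence (Inl i) (Inr j)"
  have emb: "induced_embedding ?f label_fence G"
    by (rule contains_fence_embedding[OF assms(1)])
  have "Inl i \<in> tverts label_fence" "Inr j \<in> tverts label_fence"
    using assms(2,3) by (simp_all add: tverts_label_fence fence_verts_def)
  then have "?f ` ?M \<subseteq> mixed_neighbours G (a i) (b j)"
    using image_mixed_neighbours_subset[OF emb] by fastforce
  moreover have "?M \<subseteq> tverts label_fence"
    by (auto simp: mixed_neighbours_def)
  then have "?f ` ?M \<subseteq> fence_verts a b" and "inj_on ?f ?M"
    using emb unfolding induced_embedding_def tverts_label_fence fence_verts_image[of a b]
    by (auto intro: inj_on_subset)
  moreover have "finite (fence_verts a b)"
    by (simp add: fence_verts_def)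
  ultimately have "card ?M \<le> card (mixed_neighbours G (a i) (b j) \<inter> fence_verts a b)"
    by (metis card_image card_mono finite_Int le_infI)
  then show ?thesis
    using card_mixed_neighbours_label_fence[OF assms(2,3)] by linarith
qed

theorem lemma4p6:
  fixes G :: "'v trigraph" and a b :: "nat \<Rightarrow> 'v" and S :: "'v set"
    and ps :: "('v set \<times> 'v set) list" and k i j :: nat
  assumes "is_trigraph G"
    and "contains_fence G a b"
    and "fence_attached G a b S"
    and "partial_contraction_seq G ps"
    and "k < length ps"
    and "\<forall>k' < k. \<not> involves_two (fst (ps ! k')) (snd (ps ! k')) (fence_verts a b)"
    and "i \<in> {1..6}" and "j \<in> {1..6}"
    and "involves_pair (fst (ps ! k)) (snd (ps ! k)) (a i) (b j)"
  shows "card {z \<in> tverts (apply_seq (lift G) (take (Suc k) ps)).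
                {fst (ps ! k) \<union> snd (ps ! k), z} \<in> tred (apply_seq (lift G) (take (Suc k) ps))
                \<and> z \<inter> fence_verts a b \<noteq> {}} \<ge> 3"
proof -
  let ?T = "apply_seq (lift G) (take k ps)"
  have Q: "is_quotient G ?T"
    using assms(1,4,5) is_quotient_apply_seq[of G ps k] unfolding is_trigraph_def by simp
  have sep: "separates (fence_verts a b) ?T"
    using separates_apply_seq[OF assms(6)] assms(5) by simp
  have F: "a i \<in> fence_verts a b" "b j \<in> fence_verts a b"
    using assms(7,8) by (simp_all add: fence_verts_def)
  show ?thesis
    unfolding apply_seq_take_Suc[OF assms(5)]
    using card_fence_mixed_neighbours[OF assms(2,7,8)]
      card_mixed_neighbours_le_card_red_parts[OF Q sep partial_contraction_seq_verts[OF assms(4,5)] assms(9) F]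
    by linarith
qed

end
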